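(* The subspace $K[SI[\infty]]$ of $K[\mathcal{T}[\infty]]$ spanned by sorted trees is a graded sub-$2$-associative Hopf algebra of $(K[\mathcal{T}[\infty]],\star,/,\Delta_{\mathrm s})$: it contains the one-node tree, is closed under both products $\star$ and $/$, and $\Delta_{\mathrm s}(K[SI[\infty]])\subseteq K[SI[\infty]]\otimes K[SI[\infty]]$.
   Context: $K$ is a field. A tree is a finite planar rooted tree, degree = number of non-root nodes, $\odot$ the one-node tree. An $n$--tree is a tree of degree $n$ whose non-root nodes are labelled bijectively by $\{1,\dots,n\}$; $\mathcal{T}[\infty]$ is the set of all $n$--trees. An increasing tree is an $n$--tree whose labels strictly increase along every path from the root; a sorted tree is an increasing tree in which, at every node, the labels of its children increase from left to right; $SI[\infty]$ is the set of sorted trees. Nodes $N(t)$ are ordered by depth-first post-order (subtrees left to right recursively, then the node; root maximal); write $u_1<\dots<u_n$ for non-root nodes. For a set $A$ of non-root nodes, $t_A$ is obtained by deleting non-root nodes outside $A$ (children attached in order to the parent in place of the deleted node), labels kept; $t_{[i,j]}=t_{\{u_h,\dots,u_k\}}$ if $i\le j$ and $[i,j]\cap[n]=[h,k]\ne\emptyset$, else $\odot$. Standardization $\mathrm s(t)$ relabels an $\mathbb N$-labelled tree with distinct labels by $1,\dots,|t|$ preserving relative order. $\Delta_{\mathrm s}(t)=\sum_{k=0}^n\mathrm s(t_{[1,k]})\otimes\mathrm s(t_{[k+1,n]})$. $w[m]$ adds $m$ to every label. Dot product $t\cdot w$: identify the roots, root-children of $t$ followed by those of $w$; $t/w=t\cdot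 w[|t|]$. A partition of $u$ of degree $n\ge1$ is an ordered tuple $(u_{[n_0+1,n_1]},\dots,u_{[n_{k-1}+1,n_k]})$, $0=n_0<\dots<n_k=n$; for $P=(u_1,\dots,u_k)$, $I(P,t)$ is the set of maps $f$ from blocks to $N(t)$ with $f(u_1)<\dots<f(u_k)$; $t\#_{P,f}u$ identifies the root of each $u_i$ with $f(u_i)$, the root-children of $u_i$ becoming children of $f(u_i)$ to the right of its original children, labels kept; $t* u=\sum_{P,f}t\#_{P,f}u$ ($|u|\ge1$), $t*\odot=t$; $t\star w=t* w[|t|]$. *)

theory Defs
  imports Main
begin

text \<open>A tree (with unlabelled root) is represented by the ordered list of the subtrees
  hanging from its root; the one-node tree is the empty list.\<close>

datatype ltree = LN nat "ltree list"

type_synonym tree = "ltree list"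

fun lab :: "ltree \<Rightarrow> nat" where
  "lab (LN a cs) = a"

fun nn :: "ltree \<Rightarrow> nat" where
  "nn (LN a cs) = Suc (sum_list (map nn cs))"

fun post :: "ltree \<Rightarrow> nat list" where
  "post (LN a cs) = concat (map post cs) @ [a]"

definition labels :: "tree \<Rightarrow> nat list" where
  "labels t = concat (map post t)"

text \<open>Degree = number of non-root nodes.\<close>
definition deg :: "tree \<Rightarrow> nat" where
  "deg t = length (labels t)"

fun maplab :: "(nat \<Rightarrow> nat) \<Rightarrow> ltree \<Rightarrow> ltree" where
  "maplab g (LN a cs) = LN (g a) (map (maplab g) cs)"

definition is_ntree :: "tree \<Rightarrow> bool" where
  "is_ntree t \<longleftrightarrow> distinct (labels t) \<and> set (labels t) = {1..deg t}"

definition Tinf :: "tree set" where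
  "Tinf = {t. is_ntree t}"

fun incr :: "ltree \<Rightarrow> bool" where
  "incr (LN a cs) \<longleftrightarrow> (\<forall>c\<in>set cs. \<forall>b\<in>set (post c). a < b) \<and> (\<forall>c\<in>set cs. incr c)"

fun sorted_kids :: "ltree \<Rightarrow> bool" where
  "sorted_kids (LN a cs) \<longleftrightarrow> sorted_wrt (<) (map lab cs) \<and> (\<forall>c\<in>set cs. sorted_kids c)"

definition increasing_tree :: "tree \<Rightarrow> bool" where
  "increasing_tree t \<longleftrightarrow> is_ntree t \<and> (\<forall>c\<in>set t. incr c)"

definition sorted_tree :: "tree \<Rightarrow> bool" where
  "sorted_tree t \<longleftrightarrow> increasing_tree t \<and> sorted_wrt (<) (map lab t) \<and> (\<forall>c\<in>set t. sorted_kids c)"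

definition SIinf :: "tree set" where
  "SIinf = {t. sorted_tree t}"

text \<open>Nodes are identified with their positions in depth-first post-order:
  the non-root nodes of a tree of degree n are positions 1..n, the root is n+1.
  In the functions below, off is the number of nodes preceding the current subtree
  in post-order.\<close>

text \<open>Restriction t_A: keep non-root nodes whose position satisfies P, children of
  deleted nodes are attached, in order, to the parent in place of the deleted node.\<close>
fun restrT :: "(nat \<Rightarrow> bool) \<Rightarrow> nat \<Rightarrow> ltree \<Rightarrow> ltree list"
and restrF :: "(nat \<Rightarrow> bool) \<Rightarrow> nat \<Rightarrow> ltree list \<Rightarrow> ltree list" where
  "restrT P off (LN a cs) =
     (if P (off + nn (LN a cs)) then [LN a (restrF P off cs)] else restrF P off cs)"
| "restrF P off [] = []"
| "restrF P off (c # cs) = restrT P off c @ restrF P (off + nn c) cs"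

definition restrict :: "nat set \<Rightarrow> tree \<Rightarrow> tree" where
  "restrict A t = restrF (\<lambda>p. p \<in> A) 0 t"

text \<open>t_[i,j]: restriction to the nodes u_i,...,u_j (empty range gives the one-node tree).\<close>
definition interval :: "tree \<Rightarrow> nat \<Rightarrow> nat \<Rightarrow> tree" where
  "interval t i j = restrict {i..j} t"

definition std :: "tree \<Rightarrow> tree" where
  "std t = map (maplab (\<lambda>a. card {b \<in> set (labels t). b \<le> a})) t"

definition shift :: "tree \<Rightarrow> nat \<Rightarrow> tree" where
  "shift w m = map (maplab (\<lambda>a. a + m)) w"

fun graftT :: "(nat \<Rightarrow> ltree list) \<Rightarrow> nat \<Rightarrow> ltree \<Rightarrow> ltree"
and graftF :: "(nat \<Rightarrow> ltree list) \<Rightarrow> nat \<Rightarrow> ltree list \<Rightarrow> ltree list" where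
  "graftT g off (LN a cs) = LN a (graftF g off cs @ g (off + nn (LN a cs)))"
| "graftF g off [] = []"
| "graftF g off (c # cs) = graftT g off c # graftF g (off + nn c) cs"

definition graft :: "(nat \<Rightarrow> ltree list) \<Rightarrow> tree \<Rightarrow> tree" where
  "graft g t = graftF g 0 t @ g (Suc (deg t))"

text \<open>A partition of u (degree n \<ge> 1) is given by the cut list [n_1,...,n_k] with
  0 < n_1 < ... < n_k = n; its i-th block (0-based) is u_[n_{i-1}+1, n_i].\<close>
definition cuts_ok :: "nat \<Rightarrow> nat list \<Rightarrow> bool" where
  "cuts_ok n cs \<longleftrightarrow> cs \<noteq> [] \<and> sorted_wrt (<) (0 # cs) \<and> last cs = n"

definition block :: "tree \<Rightarrow> nat list \<Rightarrow> nat \<Rightarrow> tree" where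
  "block u cs i = interval u (Suc ((0 # cs) ! i)) (cs ! i)"

text \<open>f is given by the strictly increasing list ps of images f(u_1) < ... < f(u_k),
  positions in N(t) = {1..|t|+1}.\<close>
definition graft_at :: "tree \<Rightarrow> tree \<Rightarrow> nat list \<Rightarrow> nat list \<Rightarrow> tree" where
  "graft_at t u cs ps =
     graft (\<lambda>p. concat (map (\<lambda>i. if ps ! i = p then block u cs i else []) [0..<length ps])) t"

text \<open>Elements of K[T] are finitely supported functions tree \<Rightarrow> K;
  K[T] \<otimes> K[T] is identified with finitely supported functions on pairs.\<close>

definition supp :: "('a \<Rightarrow> 'k::zero) \<Rightarrow> 'a set" where
  "supp x = {a. x a \<noteq> 0}"

definition single :: "'a \<Rightarrow> 'a \<Rightarrow> 'k::{zero,one}" where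
  "single a = (\<lambda>b. if b = a then 1 else 0)"

definition span_of :: "'a set \<Rightarrow> ('a \<Rightarrow> 'k::zero) set" where
  "span_of B = {x. finite (supp x) \<and> supp x \<subseteq> B}"

text \<open>The product t * u on basis trees (sum over partitions P and maps f).\<close>
definition graft_prod :: "tree \<Rightarrow> tree \<Rightarrow> tree \<Rightarrow> 'k::field" where
  "graft_prod t u =
     (if u = [] then single t
      else (\<lambda>s. of_nat (card {(cs, ps). cuts_ok (deg u) cs \<and> length ps = length cs
                \<and> sorted_wrt (<) ps \<and> set ps \<subseteq> {1..Suc (deg t)}
                \<and> graft_at t u cs ps = s})))"

definition star_tree :: "tree \<Rightarrow> tree \<Rightarrow> tree \<Rightarrow> 'k::field" where
  "star_tree t w = graft_prod t (shift w (deg t))"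

definition slash_tree :: "tree \<Rightarrow> tree \<Rightarrow> tree \<Rightarrow> 'k::field" where
  "slash_tree t w = single (t @ shift w (deg t))"

definition delta_tree :: "tree \<Rightarrow> tree \<times> tree \<Rightarrow> 'k::field" where
  "delta_tree t = (\<lambda>pq. \<Sum>k\<in>{0..deg t}.
       single (std (interval t 1 k), std (interval t (Suc k) (deg t))) pq)"

definition bilin :: "('a \<Rightarrow> 'a \<Rightarrow> 'b \<Rightarrow> 'k::field) \<Rightarrow> ('a \<Rightarrow> 'k) \<Rightarrow> ('a \<Rightarrow> 'k) \<Rightarrow> 'b \<Rightarrow> 'k" where
  "bilin F x y = (\<lambda>s. \<Sum>a\<in>supp x. \<Sum>b\<in>supp y. x a * y b * F a b s)"

definition lin :: "('a \<Rightarrow> 'b \<Rightarrow> 'k::field) \<Rightarrow> ('a \<Rightarrow> 'k) \<Rightarrow> 'b \<Rightarrow> 'k" where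
  "lin F x = (\<lambda>s. \<Sum>a\<in>supp x. x a * F a s)"

definition star :: "(tree \<Rightarrow> 'k::field) \<Rightarrow> (tree \<Rightarrow> 'k) \<Rightarrow> tree \<Rightarrow> 'k" where
  "star = bilin star_tree"

definition slash :: "(tree \<Rightarrow> 'k::field) \<Rightarrow> (tree \<Rightarrow> 'k) \<Rightarrow> tree \<Rightarrow> 'k" where
  "slash = bilin slash_tree"

definition Delta_s :: "(tree \<Rightarrow> 'k::field) \<Rightarrow> tree \<times> tree \<Rightarrow> 'k" where
  "Delta_s = lin delta_tree"

end

theory Submission
  imports Defs "HOL-Library.Multiset"
begin

text \<open>Sortedness of forests survives restriction to an interval of
  post-order positions, relabelling by an order embedding (standardization, shifting) and grafting,
  to the right of existing children, of forests whose labels exceed all labels of the host. Hence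
  every tree occurring in t / w, in Delta_s t and in t \<star> w is sorted once t and w are. That
  these trees are again n-trees is a count of label multisets: the blocks of a partition of u
  together carry exactly the labels of u.\<close>

declare upt_Suc [simp del]

definition sorted_forest :: "tree \<Rightarrow> bool" where
  "sorted_forest F \<longleftrightarrow> sorted_wrt (<) (map lab F) \<and> (\<forall>c\<in>set F. incr c \<and> sorted_kids c)"

lemma labels_Nil [simp]: "labels [] = []"
  by (simp add: labels_def)

lemma labels_Cons [simp]: "labels (c # cs) = post c @ labels cs"
  by (simp add: labels_def)

lemma labels_append [simp]: "labels (xs @ ys) = labels xs @ labels ys"
  by (simp add: labels_def)

lemma post_LN: "post (LN a cs) = labels cs @ [a]"
  by (simp add: labels_def)

declare post.simps [simp del]

lemma labels_eq_Nil_iff [simp]: "labels F = [] \<longleftrightarrow> F = []"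
proof (cases F)
  case (Cons c cs)
  then show ?thesis by (cases c) (simp add: post_LN)
qed simp

lemma nn_eq_length_post: "nn c = length (post c)"
proof (induction c)
  case (LN a cs)
  then have "sum_list (map nn cs) = length (labels cs)"
    by (induct cs) auto
  then show ?case by (simp add: post_LN)
qed

lemma lab_in_post: "lab c \<in> set (post c)"
  by (cases c) (simp add: post_LN)

lemma lab_in_labels: "c \<in> set F \<Longrightarrow> lab c \<in> set (labels F)"
  using lab_in_post by (auto simp: labels_def)

lemma incr_lab_le: "incr c \<Longrightarrow> b \<in> set (post c) \<Longrightarrow> lab c \<le> b"
  by (cases c) (fastforce simp: post_LN labels_def)

lemma sorted_forest_Nil [simp]: "sorted_forest []"
  by (simp add: sorted_forest_def)

lemma sorted_forest_single: "sorted_forest [c] \<longleftrightarrow> incr c \<and> sorted_kids c"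
  by (simp add: sorted_forest_def)

lemma sorted_forest_append:
  "sorted_forest (xs @ ys) \<longleftrightarrow>
     sorted_forest xs \<and> sorted_forest ys \<and> (\<forall>x\<in>set xs. \<forall>y\<in>set ys. lab x < lab y)"
  by (auto simp: sorted_forest_def sorted_wrt_append)

lemma sorted_forest_LN:
  "sorted_forest [LN a F] \<longleftrightarrow> sorted_forest F \<and> (\<forall>b\<in>set (labels F). a < b)"
  by (auto simp: sorted_forest_def labels_def)

lemma sorted_tree_iff: "sorted_tree t \<longleftrightarrow> is_ntree t \<and> sorted_forest t"
  by (auto simp: sorted_tree_def increasing_tree_def sorted_forest_def)

lemma is_ntree_iff_mset: "is_ntree t \<longleftrightarrow> mset (labels t) = mset_set {1..deg t}"
proof
  assume "mset (labels t) = mset_set {1..deg t}"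
  then show "is_ntree t"
    unfolding is_ntree_def
    by (metis count_mset_set(1,3) distinct_count_atmost_1 finite_atLeastAtMost
        finite_set_mset_mset_set set_mset_mset)
qed (simp add: is_ntree_def flip: mset_set_set)

subsection \<open>Restriction to a set of positions\<close>

lemma labels_restr:
  "labels (restrT P off c) =
     map fst (filter (P \<circ> snd) (zip (post c) [Suc off..<Suc off + length (post c)]))"
  "labels (restrF P off cs) =
     map fst (filter (P \<circ> snd) (zip (labels cs) [Suc off..<Suc off + length (labels cs)]))"
proof (induction P off c and P off cs rule: restrT_restrF.induct)
  case (1 P off a cs)
  let ?n = "Suc off + length (labels cs)"
  have "[Suc off..<Suc off + length (post (LN a cs))] = [Suc off..<?n] @ [?n]"
    by (simp add: post_LN upt_Suc_append)
  then have "zip (post (LN a cs)) [Suc off..<Suc off + length (post (LN a cs))] =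
      zip (labels cs) [Suc off..<?n] @ [(a, ?n)]"
    by (simp add: post_LN)
  moreover have "off + nn (LN a cs) = ?n"
    by (simp add: nn_eq_length_post post_LN)
  ultimately show ?case
    using 1 by (simp add: post_LN)
next
  case (3 P off c cs)
  have "[Suc off..<Suc off + length (post c @ labels cs)] =
      [Suc off..<Suc off + length (post c)] @ [Suc (off + nn c)..<Suc (off + nn c) + length (labels cs)]"
    using upt_add_eq_append[of "Suc off" "Suc off + length (post c)" "length (labels cs)"]
    by (simp add: nn_eq_length_post add.assoc)
  then show ?case
    using 3 by simp
qed simp

lemma set_map_fst_filter_zip: "set (map fst (filter Q (zip xs ys))) \<subseteq> set xs"
  by (auto dest: set_zip_leftD)

lemma distinct_map_fst_filter_zip: "distinct xs \<Longrightarrow> distinct (map fst (filter Q (zip xs ys)))"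
proof (induction xs arbitrary: ys)
  case (Cons x xs)
  then show ?case
    using set_map_fst_filter_zip[of Q xs] by (cases ys) auto
qed simp

lemma set_labels_restrF_subset: "set (labels (restrF P off cs)) \<subseteq> set (labels cs)"
  unfolding labels_restr by (rule set_map_fst_filter_zip)

lemma distinct_labels_restrF: "distinct (labels cs) \<Longrightarrow> distinct (labels (restrF P off cs))"
  unfolding labels_restr by (rule distinct_map_fst_filter_zip)

lemma restrT_nonempty_obtains_position:
  assumes "restrT P off c \<noteq> []"
  obtains p where "off < p" "p \<le> off + nn c" "P p"
proof -
  have "labels (restrT P off c) \<noteq> []"
    using assms by simp
  then obtain l p where "(l, p) \<in> set (zip (post c) [Suc off..<Suc off + length (post c)])" "P p"
    unfolding labels_restr by (fastforce simp: filter_empty_conv)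
  then have "p \<in> set [Suc off..<Suc off + length (post c)]"
    by (blast dest: set_zip_rightD)
  then show thesis
    using \<open>P p\<close> by (intro that[of p]) (auto simp: nn_eq_length_post)
qed

lemma restrF_eq_Nil: "(\<And>p. off < p \<Longrightarrow> \<not> P p) \<Longrightarrow> restrF P off cs = []"
  using labels_eq_Nil_iff[of "restrF P off cs"]
  unfolding labels_restr by (auto simp: filter_empty_conv dest!: set_zip_rightD)

definition order_convex :: "(nat \<Rightarrow> bool) \<Rightarrow> bool" where
  "order_convex P \<longleftrightarrow> (\<forall>p q r. p < q \<longrightarrow> q < r \<longrightarrow> P p \<longrightarrow> P r \<longrightarrow> P q)"

lemma order_convex_interval: "order_convex (\<lambda>p. p \<in> {i..j})"
  by (auto simp: order_convex_def)

text \<open>Convexity is what keeps the roots of the pieces in order: once a node is deleted after a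
  kept position inside it, no later position is kept.\<close>

lemma sorted_forest_restr:
  "order_convex P \<Longrightarrow> incr c \<and> sorted_kids c \<longrightarrow> sorted_forest (restrT P off c)"
  "order_convex P \<Longrightarrow> sorted_forest cs \<longrightarrow> sorted_forest (restrF P off cs)"
proof (induction P off c and P off cs rule: restrT_restrF.induct)
  case (1 P off a cs)
  show ?case
  proof
    assume "incr (LN a cs) \<and> sorted_kids (LN a cs)"
    then have "sorted_forest [LN a cs]"
      by (simp add: sorted_forest_def)
    then have "sorted_forest (restrF P off cs)" "\<forall>b\<in>set (labels (restrF P off cs)). a < b"
      using 1 set_labels_restrF_subset[of P off cs] by (auto simp: sorted_forest_LN)
    then show "sorted_forest (restrT P off (LN a cs))"
      by (simp add: sorted_forest_LN)
  qed
next
  case (3 P off c cs)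
  show ?case
  proof
    assume sorted: "sorted_forest (c # cs)"
    then have c: "incr c \<and> sorted_kids c" and cs: "sorted_forest cs"
      and lab_c_less: "\<And>d. d \<in> set cs \<Longrightarrow> lab c < lab d"
      by (simp_all add: sorted_forest_def)
    have "\<forall>x\<in>set (restrT P off c). \<forall>y\<in>set (restrF P (off + nn c) cs). lab x < lab y"
    proof (cases "P (off + nn c)")
      case True
      have "lab c < lab y" if "y \<in> set (restrF P (off + nn c) cs)" for y
      proof -
        have "lab y \<in> set (labels cs)"
          using lab_in_labels[OF that] set_labels_restrF_subset by blast
        then obtain d where "d \<in> set cs" "lab y \<in> set (post d)"
          by (auto simp: labels_def)
        moreover from this(1) have "incr d"
          using cs by (simp add: sorted_forest_def)
        ultimately show ?thesis
          using lab_c_less incr_lab_le by (meson order_less_le_trans)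
      qed
      then show ?thesis
        using True by (cases c) simp
    next
      case False
      show ?thesis
      proof (cases "restrT P off c = []")
        case False
        then obtain p where "off < p" "p \<le> off + nn c" "P p"
          by (rule restrT_nonempty_obtains_position)
        then have "p < off + nn c"
          using \<open>\<not> P (off + nn c)\<close> le_neq_implies_less by blast
        then have "\<not> P r" if "off + nn c < r" for r
          using 3(3) \<open>P p\<close> \<open>\<not> P (off + nn c)\<close> that unfolding order_convex_def by blast
        then have "restrF P (off + nn c) cs = []"
          by (rule restrF_eq_Nil)
        then show ?thesis by simp
      qed simp
    qed
    moreover have "sorted_forest (restrT P off c)" "sorted_forest (restrF P (off + nn c) cs)"
      using 3 c cs by blast+
    ultimately show "sorted_forest (restrF P off (c # cs))"
      by (simp add: sorted_forest_append)
  qed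
qed simp

lemma sorted_forest_interval: "sorted_forest u \<Longrightarrow> sorted_forest (interval u i j)"
  unfolding interval_def restrict_def using sorted_forest_restr(2)[OF order_convex_interval] by blast

subsection \<open>Relabelling along an order embedding\<close>

lemma post_maplab: "post (maplab g c) = map g (post c)"
proof (induction c)
  case (LN a cs)
  then have "labels (map (maplab g) cs) = map g (labels cs)"
    by (induct cs) auto
  then show ?case by (simp add: post_LN)
qed

lemma labels_maplab: "labels (map (maplab g) t) = map g (labels t)"
  by (induct t) (auto simp: post_maplab)

lemma lab_maplab [simp]: "lab (maplab g c) = g (lab c)"
  by (cases c) simp

lemma sorted_wrt_lab_maplab:
  assumes "strict_mono_on S g" "\<And>c. c \<in> set F \<Longrightarrow> lab c \<in> S" "sorted_wrt (<) (map lab F)"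
  shows "sorted_wrt (<) (map lab (map (maplab g) F))"
  using assms(3) unfolding sorted_wrt_map
  by (rule sorted_wrt_mono_rel[rotated]) (simp add: assms(2) strict_mono_onD[OF assms(1)])

lemma incr_sorted_kids_maplab:
  "strict_mono_on S g \<Longrightarrow> set (post c) \<subseteq> S \<Longrightarrow> incr c \<and> sorted_kids c
   \<Longrightarrow> incr (maplab g c) \<and> sorted_kids (maplab g c)"
proof (induction c)
  case (LN a cs)
  have S: "a \<in> S" "set (labels cs) \<subseteq> S" "\<And>k. k \<in> set cs \<Longrightarrow> set (post k) \<subseteq> S"
    using LN.prems(2) by (auto simp: post_LN labels_def)
  have "g a < b" if "b \<in> set (labels (map (maplab g) cs))" for b
  proof -
    from that obtain b0 where "b0 \<in> set (labels cs)" "b = g b0"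
      by (auto simp: labels_maplab)
    moreover from this(1) have "a < b0"
      using LN.prems(3) by (auto simp: labels_def)
    ultimately show ?thesis
      using S strict_mono_onD[OF LN.prems(1)] by blast
  qed
  moreover have "sorted_wrt (<) (map lab (map (maplab g) cs))"
    using LN.prems(3) S lab_in_labels by (intro sorted_wrt_lab_maplab[OF LN.prems(1)]) auto
  moreover have "incr (maplab g k) \<and> sorted_kids (maplab g k)" if "k \<in> set cs" for k
    using LN.IH[OF that LN.prems(1) S(3)[OF that]] LN.prems(3) that by simp
  ultimately show ?case
    by (auto simp: labels_def)
qed

lemma sorted_forest_maplab:
  assumes "strict_mono_on (set (labels F)) g" "sorted_forest F"
  shows "sorted_forest (map (maplab g) F)"
proof -
  have "sorted_wrt (<) (map lab (map (maplab g) F))"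
    using assms(2) lab_in_labels
    by (intro sorted_wrt_lab_maplab[OF assms(1)]) (auto simp: sorted_forest_def)
  moreover have "set (post c) \<subseteq> set (labels F)" if "c \<in> set F" for c
    using that by (auto simp: labels_def)
  ultimately show ?thesis
    using assms incr_sorted_kids_maplab[OF assms(1)] unfolding sorted_forest_def by auto
qed

definition rank :: "nat list \<Rightarrow> nat \<Rightarrow> nat" where
  "rank L a = card {b \<in> set L. b \<le> a}"

lemma std_eq_maplab_rank: "std t = map (maplab (rank (labels t))) t"
  unfolding std_def rank_def ..

lemma strict_mono_on_rank: "strict_mono_on (set L) (rank L)"
proof (rule strict_mono_onI)
  fix a b assume "a \<in> set L" "b \<in> set L" "a < b"
  then have "{x \<in> set L. x \<le> a} \<subseteq> {x \<in> set L. x \<le> b}"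
    and "b \<in> {x \<in> set L. x \<le> b} - {x \<in> set L. x \<le> a}"
    by auto
  then have "{x \<in> set L. x \<le> a} \<subset> {x \<in> set L. x \<le> b}"
    by blast
  then show "rank L a < rank L b"
    unfolding rank_def by (rule psubset_card_mono[rotated]) simp
qed

lemma rank_image:
  assumes "distinct L"
  shows "rank L ` set L = {1..length L}"
proof (rule card_subset_eq)
  show "rank L ` set L \<subseteq> {1..length L}"
  proof
    fix x assume "x \<in> rank L ` set L"
    then obtain a where "a \<in> set L" "x = rank L a" by auto
    moreover have "card {b \<in> set L. b \<le> a} \<le> card (set L)"
      by (rule card_mono) auto
    moreover have "0 < card {b \<in> set L. b \<le> a}"
      using \<open>a \<in> set L\<close> by (subst card_gt_0_iff) auto
    ultimately show "x \<in> {1..length L}"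
      using assms by (simp add: rank_def distinct_card)
  qed
  show "card (rank L ` set L) = card {1..length L}"
    using assms strict_mono_on_imp_inj_on[OF strict_mono_on_rank]
    by (simp add: card_image distinct_card)
qed simp

lemma sorted_tree_std:
  assumes "distinct (labels t)" "sorted_forest t"
  shows "sorted_tree (std t)"
proof -
  have "labels (std t) = map (rank (labels t)) (labels t)"
    by (simp add: std_eq_maplab_rank labels_maplab)
  then have "is_ntree (std t)"
    using assms(1) strict_mono_on_imp_inj_on[OF strict_mono_on_rank] rank_image[OF assms(1)]
    by (simp add: is_ntree_def deg_def distinct_map)
  moreover have "sorted_forest (std t)"
    unfolding std_eq_maplab_rank using strict_mono_on_rank assms(2) by (rule sorted_forest_maplab)
  ultimately show ?thesis
    by (simp add: sorted_tree_iff)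
qed

lemma sorted_tree_std_interval: "sorted_tree t \<Longrightarrow> sorted_tree (std (interval t i j))"
  unfolding interval_def restrict_def
  by (intro sorted_tree_std distinct_labels_restrF sorted_forest_restr(2)[OF order_convex_interval, rule_format])
    (simp_all add: sorted_tree_iff is_ntree_def)

lemma labels_shift: "labels (shift w m) = map (\<lambda>a. a + m) (labels w)"
  by (simp add: shift_def labels_maplab)

lemma sorted_forest_shift: "sorted_forest w \<Longrightarrow> sorted_forest (shift w m)"
  unfolding shift_def by (rule sorted_forest_maplab) (auto intro: strict_mono_onI)

lemma mset_labels_shift_ntree:
  assumes "is_ntree w"
  shows "mset (labels (shift w m)) = mset_set {Suc m..m + deg w}"
proof -
  have "mset (labels (shift w m)) = image_mset (\<lambda>a. a + m) (mset_set {1..deg w})"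
    using assms by (simp add: labels_shift is_ntree_iff_mset)
  also have "\<dots> = mset_set ((\<lambda>a. a + m) ` {1..deg w})"
    by (rule image_mset_mset_set) (simp add: inj_on_def)
  finally show ?thesis
    by (simp add: add.commute)
qed

lemma lab_mem_ntree: "is_ntree t \<Longrightarrow> c \<in> set t \<Longrightarrow> lab c \<in> {1..deg t}"
  using lab_in_labels by (auto simp: is_ntree_def)

lemma mset_set_atLeastAtMost_append:
  "mset_set {1..m} + mset_set {Suc m..m + n} = mset_set {1..m + n :: nat}"
  by (subst mset_set_Union[symmetric]) (auto intro: arg_cong[where f = mset_set])

lemma sorted_tree_slash:
  assumes t: "sorted_tree t" and w: "sorted_tree w"
  shows "sorted_tree (t @ shift w (deg t))"
proof -
  have "deg (t @ shift w (deg t)) = deg t + deg w"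
    by (simp add: deg_def labels_shift)
  then have "is_ntree (t @ shift w (deg t))"
    using t w mset_labels_shift_ntree[of w "deg t"] mset_set_atLeastAtMost_append[of "deg t" "deg w"]
    by (simp add: sorted_tree_iff is_ntree_iff_mset)
  moreover have "lab x < lab y" if "x \<in> set t" "y \<in> set (shift w (deg t))" for x y
  proof -
    have "lab y \<in> set (labels (shift w (deg t)))"
      using lab_in_labels[OF that(2)] .
    then have "deg t < lab y"
      using w by (auto simp: labels_shift sorted_tree_iff is_ntree_def)
    then show ?thesis
      using lab_mem_ntree[OF _ that(1)] t by (force simp: sorted_tree_iff)
  qed
  ultimately show ?thesis
    using t w sorted_forest_shift by (simp add: sorted_tree_iff sorted_forest_append)
qed

subsection \<open>Grafting\<close>

lemma lab_graftT [simp]: "lab (graftT g off c) = lab c"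
  by (cases c) simp

lemma map_lab_graftF [simp]: "map lab (graftF g off cs) = map lab cs"
  by (induct cs arbitrary: off) auto

lemma image_lab_graftF [simp]: "lab ` set (graftF g off cs) = lab ` set cs"
  by (metis list.set_map map_lab_graftF)

lemma lab_graftF_le:
  assumes "set (labels cs) \<subseteq> {..M}" "x \<in> set (graftF g off cs)"
  shows "lab x \<le> M"
proof -
  have "lab x \<in> lab ` set cs"
    using assms(2) image_lab_graftF by (metis image_eqI)
  then show ?thesis
    using assms(1) lab_in_labels by fastforce
qed

lemma mset_labels_graftT_graftF:
  "mset (post (graftT g off c)) =
     mset (post c) + (\<Sum>p\<in>{Suc off..off + nn c}. mset (labels (g p)))"
  "mset (labels (graftF g off cs)) =
     mset (labels cs) + (\<Sum>p\<in>{Suc off..off + length (labels cs)}. mset (labels (g p)))"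
proof (induction g off c and g off cs rule: graftT_graftF.induct)
  case (1 g off a cs)
  have "off + nn (LN a cs) = Suc (off + length (labels cs))"
    by (simp add: nn_eq_length_post post_LN)
  moreover have "{Suc off..Suc (off + length (labels cs))} =
      insert (Suc (off + length (labels cs))) {Suc off..off + length (labels cs)}"
    by auto
  ultimately show ?case
    using 1 by (simp add: post_LN)
next
  case (3 g off c cs)
  have "{Suc off..off + length (labels (c # cs))} =
      {Suc off..off + nn c} \<union> {Suc (off + nn c)..off + nn c + length (labels cs)}"
    by (auto simp: nn_eq_length_post)
  then show ?case
    using 3 by (simp add: sum.union_disjoint)
qed simp

lemma mset_labels_graft:
  "mset (labels (graft g t)) = mset (labels t) + (\<Sum>p\<in>{1..Suc (deg t)}. mset (labels (g p)))"
proof -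
  have "{1..Suc (length (labels t))} = insert (Suc (length (labels t))) {Suc 0..length (labels t)}"
    by auto
  then show ?thesis
    by (simp add: graft_def mset_labels_graftT_graftF(2) deg_def ac_simps)
qed

lemma set_labels_graftF_subset:
  "set (labels (graftF g off cs)) \<subseteq> set (labels cs) \<union> (\<Union>p. set (labels (g p)))"
proof -
  have "set (labels (graftF g off cs)) =
      set (labels cs) \<union> (\<Union>p\<in>{Suc off..off + length (labels cs)}. set (labels (g p)))"
    using arg_cong[OF mset_labels_graftT_graftF(2), of set_mset g off cs]
    by (simp add: set_mset_sum)
  then show ?thesis
    by blast
qed

text \<open>Grafting forests whose labels all exceed those of the host keeps every list of children
  sorted, because grafted subtrees are appended on the right.\<close>

lemma sorted_forest_graftT_graftF:
  "(\<And>p. sorted_forest (g p)) \<Longrightarrow> (\<And>p. \<forall>l\<in>set (labels (g p)). M < l)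
    \<Longrightarrow> incr c \<Longrightarrow> sorted_kids c \<Longrightarrow> set (post c) \<subseteq> {..M}
    \<Longrightarrow> incr (graftT g off c) \<and> sorted_kids (graftT g off c)"
  "(\<And>p. sorted_forest (g p)) \<Longrightarrow> (\<And>p. \<forall>l\<in>set (labels (g p)). M < l)
    \<Longrightarrow> sorted_forest cs \<Longrightarrow> set (labels cs) \<subseteq> {..M}
    \<Longrightarrow> sorted_forest (graftF g off cs)"
proof (induction g off c and g off cs rule: graftT_graftF.induct)
  case (1 g off a cs)
  let ?q = "off + nn (LN a cs)"
  have kids: "sorted_forest [LN a cs]" "set (labels cs) \<subseteq> {..M}" "a \<le> M"
    using "1.prems"(3-5) by (auto simp: sorted_forest_def post_LN)
  then have "sorted_forest (graftF g off cs)"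
    using "1.IH" "1.prems"(1,2) by (simp add: sorted_forest_LN)
  moreover have "lab x < lab y" if "x \<in> set (graftF g off cs)" "y \<in> set (g ?q)" for x y
    using lab_graftF_le[OF kids(2) that(1)] "1.prems"(2) lab_in_labels[OF that(2)] by fastforce
  moreover have "a < b" if "b \<in> set (labels (graftF g off cs @ g ?q))" for b
  proof -
    have "b \<in> set (labels cs) \<or> (\<exists>p. b \<in> set (labels (g p)))"
      using that set_labels_graftF_subset by fastforce
    then show "a < b"
      using kids "1.prems"(2) by (auto simp: sorted_forest_LN intro: le_less_trans)
  qed
  ultimately have "sorted_forest [LN a (graftF g off cs @ g ?q)]"
    using "1.prems"(1) by (simp add: sorted_forest_LN sorted_forest_append)
  then show ?case
    by (simp only: graftT.simps sorted_forest_single)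
next
  case (3 g off c cs)
  have "incr c" "sorted_kids c" "set (post c) \<subseteq> {..M}"
    and "sorted_forest cs" "set (labels cs) \<subseteq> {..M}"
    using "3.prems"(3,4) by (simp_all add: sorted_forest_def)
  then have "incr (graftT g off c) \<and> sorted_kids (graftT g off c)"
    and "sorted_forest (graftF g (off + nn c) cs)"
    using "3.IH" "3.prems"(1,2) by blast+
  then show ?case
    using "3.prems"(3) by (simp add: sorted_forest_def)
qed simp

lemma sorted_forest_graft:
  assumes "\<And>p. sorted_forest (g p)" "\<And>p. \<forall>l\<in>set (labels (g p)). M < l"
    and "sorted_forest t" "set (labels t) \<subseteq> {..M}"
  shows "sorted_forest (graft g t)"
proof -
  have "lab x < lab y" if "x \<in> set (graftF g 0 t)" "y \<in> set (g (Suc (deg t)))" for x y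
    using lab_graftF_le[OF assms(4) that(1)] assms(2) lab_in_labels[OF that(2)] by fastforce
  then show ?thesis
    using sorted_forest_graftT_graftF(2)[of g M t 0] assms
    by (simp add: graft_def sorted_forest_append)
qed

subsection \<open>Partitions into consecutive blocks\<close>

lemma mset_labels_interval:
  "mset (labels (interval u a b)) =
     image_mset fst {#x \<in># mset (zip (labels u) [1..<Suc (deg u)]). snd x \<in> {a..b}#}"
  by (simp add: interval_def restrict_def labels_restr(2) deg_def o_def flip: mset_map mset_filter)

lemma filter_mset_atLeastAtMost_split:
  fixes f :: "'a \<Rightarrow> nat"
  assumes "a \<le> b" "b \<le> c"
  shows "{#x \<in># M. f x \<in> {Suc a..b}#} + {#x \<in># M. f x \<in> {Suc b..c}#} = {#x \<in># M. f x \<in> {Suc a..c}#}"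
  using assms by (intro multiset_eqI) auto

lemma sum_filter_mset_consecutive:
  fixes f :: "'a \<Rightarrow> nat" and c :: "nat \<Rightarrow> nat"
  assumes "mono_on {..k} c"
  shows "(\<Sum>i<k. {#x \<in># M. f x \<in> {Suc (c i)..c (Suc i)}#}) = {#x \<in># M. f x \<in> {Suc (c 0)..c k}#}"
  using assms
proof (induction k)
  case (Suc k)
  have "mono_on {..k} c"
    using Suc.prems by (rule mono_on_subset) auto
  moreover have "c 0 \<le> c k" "c k \<le> c (Suc k)"
    by (simp_all add: mono_onD[OF Suc.prems])
  ultimately show ?case
    using Suc.IH filter_mset_atLeastAtMost_split[of "c 0" "c k" "c (Suc k)" f M] by simp
qed (simp add: multiset_eqI)

lemma sum_mset_labels_block:
  assumes "cuts_ok (deg u) cs"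
  shows "(\<Sum>i<length cs. mset (labels (block u cs i))) = mset (labels u)"
proof -
  define c where "c j = (0 # cs) ! j" for j
  define Z where "Z = mset (zip (labels u) [1..<Suc (deg u)])"
  have sorted: "sorted_wrt (<) (0 # cs)" and "cs \<noteq> []" "last cs = deg u"
    using assms by (auto simp: cuts_ok_def)
  then have ends: "c 0 = 0" "c (length cs) = deg u"
    by (simp_all add: c_def last_conv_nth nth_Cons')
  have "mono_on {..length cs} c"
  proof (rule mono_onI)
    fix i j assume "i \<in> {..length cs}" "j \<in> {..length cs}" "i \<le> j"
    then show "c i \<le> c j"
      using sorted_wrt_nth_less[OF sorted, of i j] unfolding c_def
      by (cases "i = j") auto
  qed
  then have "(\<Sum>i<length cs. {#x \<in># Z. snd x \<in> {Suc (c i)..c (Suc i)}#}) =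
      {#x \<in># Z. snd x \<in> {Suc (c 0)..c (length cs)}#}"
    by (rule sum_filter_mset_consecutive)
  also have "\<dots> = {#x \<in># Z. True#}"
  proof (rule filter_mset_cong0)
    fix x assume "x \<in># Z"
    then have "snd x \<in> set [1..<Suc (deg u)]"
      by (cases x) (auto simp: Z_def dest: set_zip_rightD)
    then show "snd x \<in> {Suc (c 0)..c (length cs)} \<longleftrightarrow> True"
      by (simp add: ends)
  qed
  finally have "(\<Sum>i<length cs. image_mset fst {#x \<in># Z. snd x \<in> {Suc (c i)..c (Suc i)}#}) =
      image_mset fst Z"
    by (simp add: sum_comp_morphism[of "image_mset fst", unfolded o_def])
  then show ?thesis
    by (simp add: block_def mset_labels_interval c_def Z_def deg_def flip: mset_map)
qed

lemma mset_labels_concat_select: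
  "mset (labels (concat (map (\<lambda>i. if ps ! i = p then B i else []) [0..<k]))) =
     (\<Sum>i<k. if ps ! i = p then mset (labels (B i)) else {#})"
  by (induct k) (simp_all add: upt_Suc)

text \<open>Since the grafting positions are distinct, each node receives at most one block.\<close>

lemma concat_select_distinct_cases:
  assumes "distinct ps" "k \<le> length ps"
  shows "concat (map (\<lambda>i. if ps ! i = p then B i else []) [0..<k]) \<in> insert [] (B ` {..<k})"
  using assms(2)
proof (induction k)
  case (Suc k)
  show ?case
  proof (cases "ps ! k = p")
    case True
    then have "ps ! i \<noteq> p" if "i < k" for i
      using that Suc.prems nth_eq_iff_index_eq[OF assms(1)] by fastforce
    then have nil: "concat (map (\<lambda>i. if ps ! i = p then B i else []) [0..<k]) = []"
      by simp
    show ?thesis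
      using True by (simp add: upt_Suc nil)
  next
    case False
    then show ?thesis
      using Suc by (auto simp: upt_Suc)
  qed
qed simp

definition grafted_blocks :: "tree \<Rightarrow> nat list \<Rightarrow> nat list \<Rightarrow> nat \<Rightarrow> tree" where
  "grafted_blocks u cs ps p = concat (map (\<lambda>i. if ps ! i = p then block u cs i else []) [0..<length ps])"

lemma graft_at_eq_graft: "graft_at t u cs ps = graft (grafted_blocks u cs ps) t"
  by (simp add: graft_at_def grafted_blocks_def[abs_def])

lemma grafted_blocks_cases:
  assumes "distinct ps"
  obtains "grafted_blocks u cs ps p = []" | i where "grafted_blocks u cs ps p = block u cs i"
  using concat_select_distinct_cases[OF assms order_refl, of p "block u cs"]
  unfolding grafted_blocks_def by blast

lemma sum_mset_labels_grafted_blocks: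
  assumes "cuts_ok (deg u) cs" "length ps = length cs" "set ps \<subseteq> N" "finite N"
  shows "(\<Sum>p\<in>N. mset (labels (grafted_blocks u cs ps p))) = mset (labels u)"
proof -
  have ps_mem: "ps ! i \<in> N" if "i \<in> {..<length cs}" for i
    using assms(2,3) nth_mem that by (metis lessThan_iff subsetD)
  have "(\<Sum>p\<in>N. mset (labels (grafted_blocks u cs ps p))) =
      (\<Sum>i<length cs. \<Sum>p\<in>N. if ps ! i = p then mset (labels (block u cs i)) else {#})"
    unfolding grafted_blocks_def mset_labels_concat_select assms(2) by (rule sum.swap)
  also have "\<dots> = (\<Sum>i<length cs. mset (labels (block u cs i)))"
    by (rule sum.cong[OF refl], subst sum.delta') (simp_all only: ps_mem if_True assms(4))
  also have "\<dots> = mset (labels u)"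
    by (rule sum_mset_labels_block[OF assms(1)])
  finally show ?thesis .
qed

lemma sorted_tree_graft_at:
  assumes t: "sorted_tree t" and w: "sorted_tree w" and u: "u = shift w (deg t)"
    and cuts: "cuts_ok (deg u) cs" and len: "length ps = length cs"
    and ps: "sorted_wrt (<) ps" "set ps \<subseteq> {1..Suc (deg t)}"
  shows "sorted_tree (graft_at t u cs ps)"
proof -
  let ?g = "grafted_blocks u cs ps"
  have "mset (labels (graft ?g t)) = mset (labels t) + mset (labels u)"
    by (simp only: mset_labels_graft sum_mset_labels_grafted_blocks[OF cuts len ps(2) finite_atLeastAtMost])
  also have "\<dots> = mset_set {1..deg t} + mset_set {Suc (deg t)..deg t + deg w}"
    using t w mset_labels_shift_ntree[of w "deg t"]
    by (simp add: u sorted_tree_iff is_ntree_iff_mset)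
  also have "\<dots> = mset_set {1..deg t + deg w}"
    by (rule mset_set_atLeastAtMost_append)
  finally have labels_graft: "mset (labels (graft ?g t)) = mset_set {1..deg t + deg w}" .
  then have "deg (graft ?g t) = deg t + deg w"
    unfolding deg_def by (metis card_atLeastAtMost diff_Suc_1 size_mset size_mset_set)
  then have "is_ntree (graft ?g t)"
    using labels_graft by (simp add: is_ntree_iff_mset)
  moreover have "sorted_forest (graft ?g t)"
  proof (rule sorted_forest_graft)
    have block_sorted: "sorted_forest (block u cs i)" for i
      using w by (simp add: block_def sorted_forest_interval sorted_forest_shift u sorted_tree_iff)
    have block_above: "\<forall>l\<in>set (labels (block u cs i)). deg t < l" for i
      using w set_labels_restrF_subset
      by (fastforce simp: block_def interval_def restrict_def u labels_shift sorted_tree_iff is_ntree_def)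
    have "distinct ps"
      using ps(1) by (simp add: strict_sorted_iff)
    then show "sorted_forest (?g p)" "\<forall>l\<in>set (labels (?g p)). deg t < l" for p
      by (cases rule: grafted_blocks_cases[of ps u cs p]; simp add: block_sorted block_above)+
    show "sorted_forest t" "set (labels t) \<subseteq> {..deg t}"
      using t by (auto simp: sorted_tree_iff is_ntree_def)
  qed
  ultimately show ?thesis
    by (simp add: graft_at_eq_graft sorted_tree_iff)
qed

subsection \<open>Linear extension\<close>

lemma supp_single: "supp (single a :: 'a \<Rightarrow> 'k::{zero_neq_one}) = {a}"
  by (auto simp: supp_def single_def)

lemma supp_bilin_subset: "supp (bilin F x y) \<subseteq> (\<Union>a\<in>supp x. \<Union>b\<in>supp y. supp (F a b))"
proof
  fix s assume "s \<in> supp (bilin F x y)"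
  then have "(\<Sum>a\<in>supp x. \<Sum>b\<in>supp y. x a * y b * F a b s) \<noteq> 0"
    by (simp add: supp_def bilin_def)
  then obtain a b where "a \<in> supp x" "b \<in> supp y" "x a * y b * F a b s \<noteq> 0"
    by (meson sum.not_neutral_contains_not_neutral)
  then show "s \<in> (\<Union>a\<in>supp x. \<Union>b\<in>supp y. supp (F a b))"
    by (auto simp: supp_def)
qed

lemma supp_lin_subset: "supp (lin F x) \<subseteq> (\<Union>a\<in>supp x. supp (F a))"
proof
  fix s assume "s \<in> supp (lin F x)"
  then have "(\<Sum>a\<in>supp x. x a * F a s) \<noteq> 0"
    by (simp add: supp_def lin_def)
  then obtain a where "a \<in> supp x" "x a * F a s \<noteq> 0"
    by (rule sum.not_neutral_contains_not_neutral)
  then show "s \<in> (\<Union>a\<in>supp x. supp (F a))"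
    by (auto simp: supp_def)
qed

lemma bilin_in_span_of:
  assumes "x \<in> span_of A" "y \<in> span_of B"
    and "\<And>a b. a \<in> A \<Longrightarrow> b \<in> B \<Longrightarrow> F a b \<in> span_of C"
  shows "bilin F x y \<in> span_of C"
proof -
  have "finite (\<Union>a\<in>supp x. \<Union>b\<in>supp y. supp (F a b))"
    and "(\<Union>a\<in>supp x. \<Union>b\<in>supp y. supp (F a b)) \<subseteq> C"
    using assms by (fastforce simp: span_of_def)+
  then show ?thesis
    using supp_bilin_subset[of F x y] by (auto simp: span_of_def intro: finite_subset)
qed

lemma lin_in_span_of:
  assumes "x \<in> span_of A" and "\<And>a. a \<in> A \<Longrightarrow> F a \<in> span_of C"
  shows "lin F x \<in> span_of C"
proof -
  have "finite (\<Union>a\<in>supp x. supp (F a))" and "(\<Union>a\<in>supp x. supp (F a)) \<subseteq> C"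
    using assms by (fastforce simp: span_of_def)+
  then show ?thesis
    using supp_lin_subset[of F x] by (auto simp: span_of_def intro: finite_subset)
qed

subsection \<open>The three operations on sorted trees\<close>

lemma finite_strictly_sorted_lists: "finite {xs :: 'a::linorder list. sorted_wrt (<) xs \<and> set xs \<subseteq> A}"
  if "finite A"
proof (rule finite_subset)
  show "{xs. sorted_wrt (<) xs \<and> set xs \<subseteq> A} \<subseteq> sorted_list_of_set ` Pow A"
  proof
    fix xs assume "xs \<in> {xs. sorted_wrt (<) xs \<and> set xs \<subseteq> A}"
    then have "xs = sorted_list_of_set (set xs)" "set xs \<in> Pow A"
      by (auto simp: sorted_list_of_set.idem_if_sorted_distinct strict_sorted_iff)
    then show "xs \<in> sorted_list_of_set ` Pow A"
      by blast
  qed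
qed (use that in simp)

lemma strict_sorted_le_last:
  fixes xs :: "'a::linorder list"
  assumes "sorted_wrt (<) xs" "x \<in> set xs"
  shows "x \<le> last xs"
proof -
  obtain i where "i < length xs" "x = xs ! i"
    using assms(2) by (auto simp: in_set_conv_nth)
  moreover have "sorted xs"
    using assms(1) by (rule strict_sorted_imp_sorted)
  moreover have "xs \<noteq> []"
    using assms(2) by auto
  then have "last xs = xs ! (length xs - 1)"
    by (rule last_conv_nth)
  ultimately show ?thesis
    by (simp add: sorted_nth_mono)
qed

lemma star_tree_in_span_of:
  assumes "sorted_tree t" "sorted_tree w"
  shows "(star_tree t w :: tree \<Rightarrow> 'k::field) \<in> span_of SIinf"
proof (cases "shift w (deg t) = []")
  case True
  then show ?thesis
    using assms(1) by (simp add: star_tree_def graft_prod_def span_of_def supp_single SIinf_def)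
next
  case False
  define u where "u = shift w (deg t)"
  define V where "V = {(cs, ps). cuts_ok (deg u) cs \<and> length ps = length cs
    \<and> sorted_wrt (<) ps \<and> set ps \<subseteq> {1..Suc (deg t)}}"
  have "supp (star_tree t w :: tree \<Rightarrow> 'k) \<subseteq> (\<lambda>(cs, ps). graft_at t u cs ps) ` V"
  proof
    fix s assume "s \<in> supp (star_tree t w :: tree \<Rightarrow> 'k)"
    then have "(of_nat (card {(cs, ps). (cs, ps) \<in> V \<and> graft_at t u cs ps = s}) :: 'k) \<noteq> 0"
      using False by (simp add: supp_def star_tree_def graft_prod_def V_def u_def)
    then have "{(cs, ps). (cs, ps) \<in> V \<and> graft_at t u cs ps = s} \<noteq> {}"
      by (metis card.empty of_nat_0)
    then show "s \<in> (\<lambda>(cs, ps). graft_at t u cs ps) ` V"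
      by auto
  qed
  moreover have "(\<lambda>(cs, ps). graft_at t u cs ps) ` V \<subseteq> SIinf"
    using sorted_tree_graft_at[OF assms u_def] by (auto simp: V_def SIinf_def)
  moreover have "V \<subseteq> {xs. sorted_wrt (<) xs \<and> set xs \<subseteq> {..deg u}} \<times>
      {xs. sorted_wrt (<) xs \<and> set xs \<subseteq> {1..Suc (deg t)}}"
    by (auto simp: V_def cuts_ok_def dest: strict_sorted_le_last)
  then have "finite V"
    by (rule finite_subset) (simp add: finite_strictly_sorted_lists)
  ultimately show ?thesis
    by (auto simp: span_of_def intro: finite_subset)
qed

lemma single_in_span_of: "a \<in> A \<Longrightarrow> (single a :: 'a \<Rightarrow> 'k::zero_neq_one) \<in> span_of A"
  by (simp add: span_of_def supp_single)

lemma slash_tree_in_span_of: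
  "sorted_tree t \<Longrightarrow> sorted_tree w \<Longrightarrow> (slash_tree t w :: tree \<Rightarrow> 'k::field) \<in> span_of SIinf"
  unfolding slash_tree_def by (rule single_in_span_of) (simp add: SIinf_def sorted_tree_slash)

lemma delta_tree_in_span_of:
  assumes "sorted_tree t"
  shows "(delta_tree t :: tree \<times> tree \<Rightarrow> 'k::field) \<in> span_of (SIinf \<times> SIinf)"
proof -
  let ?cut = "\<lambda>k. (std (interval t 1 k), std (interval t (Suc k) (deg t)))"
  have supp_cuts: "supp (delta_tree t :: tree \<times> tree \<Rightarrow> 'k) \<subseteq> ?cut ` {0..deg t}"
  proof
    fix pq assume "pq \<in> supp (delta_tree t :: tree \<times> tree \<Rightarrow> 'k)"
    then have "(\<Sum>k\<in>{0..deg t}. single (?cut k) pq :: 'k) \<noteq> 0"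
      by (simp add: supp_def delta_tree_def)
    then obtain k where "k \<in> {0..deg t}" "(single (?cut k) pq :: 'k) \<noteq> 0"
      by (rule sum.not_neutral_contains_not_neutral)
    then show "pq \<in> ?cut ` {0..deg t}"
      by (auto simp: single_def split: if_splits)
  qed
  moreover have "?cut ` {0..deg t} \<subseteq> SIinf \<times> SIinf"
    using sorted_tree_std_interval[OF assms] by (auto simp: SIinf_def)
  moreover have "finite (supp (delta_tree t :: tree \<times> tree \<Rightarrow> 'k))"
    using supp_cuts by (rule finite_subset) simp
  ultimately show ?thesis
    unfolding span_of_def by blast
qed

theorem proposition4p5:
  fixes x y :: "tree \<Rightarrow> 'k::field"
  shows "SIinf \<subseteq> Tinf
    \<and> (single [] :: tree \<Rightarrow> 'k) \<in> span_of SIinf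
    \<and> (x \<in> span_of SIinf \<longrightarrow> y \<in> span_of SIinf \<longrightarrow>
          star x y \<in> span_of SIinf
        \<and> slash x y \<in> span_of SIinf
        \<and> Delta_s x \<in> span_of (SIinf \<times> SIinf))"
proof (intro conjI impI)
  show "SIinf \<subseteq> Tinf"
    by (auto simp: SIinf_def Tinf_def sorted_tree_def increasing_tree_def)
  show "(single [] :: tree \<Rightarrow> 'k) \<in> span_of SIinf"
    by (rule single_in_span_of) (simp add: SIinf_def sorted_tree_iff is_ntree_def deg_def)
  assume x: "x \<in> span_of SIinf" and y: "y \<in> span_of SIinf"
  show "star x y \<in> span_of SIinf"
    unfolding star_def using x y by (rule bilin_in_span_of) (rule star_tree_in_span_of; simp add: SIinf_def)
  show "slash x y \<in> span_of SIinf"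
    unfolding slash_def using x y by (rule bilin_in_span_of) (rule slash_tree_in_span_of; simp add: SIinf_def)
  show "Delta_s x \<in> span_of (SIinf \<times> SIinf)"
    unfolding Delta_s_def using x by (rule lin_in_span_of) (rule delta_tree_in_span_of; simp add: SIinf_def)
qed

end
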